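(* Let $L$ be an even hyperbolic lattice with fixed positive cone $\mathcal{P}_L$, let $G$ be a subgroup of $\mathrm{O}^+(L)$ of finite index, and let $\mathcal{V}\subset\mathcal{N}_L\cap L^\vee$ satisfy conditions (V1)–(V4) below. Let $\Pi=\mathbb{R}_{\ge0}v_1+\cdots+\mathbb{R}_{\ge0}v_n$ be a rational polyhedral cone, where $v_1,\dots,v_n$ are non-zero vectors of $\overline{\mathcal{P}}_L\cap L$. Then the number of $\mathcal{V}^*$-chambers that intersect $\Pi\cap\mathcal{P}_L$ is finite. (V1) There is $c>0$ with $-v^2<c$ for all $v\in\mathcal{V}$. (V2) $\mathcal{V}$ is $G$-invariant. (V3) Every $\mathcal{V}^*$-chamber has a finite defining set. (V4) For every $\mathcal{V}^*$-chamber $D$, every non-zero vector $x$ in the closure of $D$ in $L\otimes\mathbb{R}$ with $x^2=0$ is a positive real multiple of a vector of $L$.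
   Context: $L$ is an even hyperbolic lattice: a free $\mathbb{Z}$-module of finite rank $n>1$ with a non-degenerate even symmetric bilinear form $\langle\ ,\ \rangle$ of signature $(1,n-1)$, extended to $L\otimes\mathbb{R}$, $x^2=\langle x,x\rangle$. $L^\vee\subset L\otimes\mathbb{Q}$ is the dual lattice. $\mathcal{P}_L$ is one of the two connected components of $\{x: x^2>0\}$ and $\overline{\mathcal{P}}_L$ its closure in $L\otimes\mathbb{R}$; $\mathrm{O}^+(L)$ is the group of isometries of $L$ preserving $\mathcal{P}_L$. $\mathcal{N}_L=\{v\in L\otimes\mathbb{R}: v^2<0\}$; for $v\in\mathcal{N}_L$, $(v)^\perp=\{x\in\mathcal{P}_L:\langle x,v\rangle=0\}$. For $\Delta\subset\mathcal{N}_L$, $\Sigma_L(\Delta)=\{x:\langle x,v\rangle\ge0\ \forall v\in\Delta\}$. A $\mathcal{V}^*$-chamber is the closure in $\mathcal{P}_L$ of a connected component of $\mathcal{P}_L\setminus\bigcup_{v\in\mathcal{V}}(v)^\perp$ (this family of hyperplanes is locally finite under (V1)). A defining set of a $\mathcal{V}^*$-chamber $D$ is a subset $\Delta\subset\mathcal{N}_L\cap L^\vee$ with $D=\Sigma_L(\Delta)\cap\mathcal{P}_L$. *)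

theory Defs
  imports "HOL-Analysis.Analysis"
begin

text \<open>The lattice L is Z^n inside L (x) R = R^n (index type 'n), with bilinear form
  given by a Gram matrix B (entries are the pairings of the basis vectors).\<close>

definition bform :: "real^'n^'n \<Rightarrow> real^'n \<Rightarrow> real^'n \<Rightarrow> real" where
  "bform B x y = x \<bullet> (B *v y)"

definition lat :: "(real^'n) set" where
  "lat = {x. \<forall>i. x $ i \<in> \<int>}"

definition dual_lat :: "real^'n^'n \<Rightarrow> (real^'n) set" where
  "dual_lat B = {x. (\<forall>i. x $ i \<in> \<rat>) \<and> (\<forall>l\<in>lat. bform B x l \<in> \<int>)}"

text \<open>Even hyperbolic lattice: integral symmetric Gram matrix, even diagonal,
  non-degenerate, signature (1, n-1) (Sylvester normal form), rank n > 1.\<close>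
definition even_hyperbolic :: "real^'n^'n \<Rightarrow> bool" where
  "even_hyperbolic B \<longleftrightarrow> CARD('n) > 1 \<and>
     (\<forall>i j. B $ i $ j \<in> \<int>) \<and> transpose B = B \<and>
     (\<forall>i. \<exists>k::int. B $ i $ i = 2 * of_int k) \<and> det B \<noteq> 0 \<and>
     (\<exists>(P::real^'n^'n) i0. invertible P \<and>
        transpose P ** B ** P = (\<chi> i j. if i = j then (if i = i0 then 1 else -1) else 0))"

definition pos_cone :: "real^'n^'n \<Rightarrow> real^'n \<Rightarrow> (real^'n) set" where
  "pos_cone B h = connected_component_set {x. bform B x x > 0} h"

definition neg_set :: "real^'n^'n \<Rightarrow> (real^'n) set" where
  "neg_set B = {v. bform B v v < 0}"

definition perp_hyp :: "real^'n^'n \<Rightarrow> real^'n \<Rightarrow> real^'n \<Rightarrow> (real^'n) set" where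
  "perp_hyp B h v = {x \<in> pos_cone B h. bform B x v = 0}"

definition Sigma_L :: "real^'n^'n \<Rightarrow> (real^'n) set \<Rightarrow> (real^'n) set" where
  "Sigma_L B \<Delta> = {x. \<forall>v\<in>\<Delta>. bform B x v \<ge> 0}"

definition O_plus :: "real^'n^'n \<Rightarrow> real^'n \<Rightarrow> (real^'n \<Rightarrow> real^'n) set" where
  "O_plus B h = {g. linear g \<and> bij g \<and> g ` lat = lat \<and>
      (\<forall>x y. bform B (g x) (g y) = bform B x y) \<and> g ` pos_cone B h = pos_cone B h}"

definition finite_index_subgroup ::
  "(real^'n \<Rightarrow> real^'n) set \<Rightarrow> (real^'n \<Rightarrow> real^'n) set \<Rightarrow> bool" where
  "finite_index_subgroup G Og \<longleftrightarrow> G \<subseteq> Og \<and> id \<in> G \<and>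
     (\<forall>g\<in>G. \<forall>k\<in>G. g \<circ> k \<in> G) \<and> (\<forall>g\<in>G. inv g \<in> G) \<and>
     (\<exists>F. finite F \<and> F \<subseteq> Og \<and> Og = (\<Union>f\<in>F. (\<lambda>g. f \<circ> g) ` G))"

definition chambers :: "real^'n^'n \<Rightarrow> real^'n \<Rightarrow> (real^'n) set \<Rightarrow> (real^'n) set set" where
  "chambers B h V = (let U = pos_cone B h - (\<Union>v\<in>V. perp_hyp B h v) in
     {closure (connected_component_set U x) \<inter> pos_cone B h | x. x \<in> U})"

definition defining_set :: "real^'n^'n \<Rightarrow> real^'n \<Rightarrow> (real^'n) set \<Rightarrow> (real^'n) set \<Rightarrow> bool" where
  "defining_set B h D \<Delta> \<longleftrightarrow> \<Delta> \<subseteq> neg_set B \<inter> dual_lat B \<and> D = Sigma_L B \<Delta> \<inter> pos_cone B h"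

end

theory Submission
  imports Defs
begin

text \<open>
  Only finitely many walls \<open>v\<^sup>\<perp>\<close>, \<open>v \<in> \<V>\<close>, meet \<open>\<Pi> \<inter> \<P>\<^sub>L\<close>. If \<open>v\<close> is orthogonal to a point of \<open>\<Pi> \<inter> \<P>\<^sub>L\<close>, normalize it
  so that its largest coefficient, at a generator \<open>m\<close>, is \<open>1\<close>. Either \<open>m\<close> is timelike, or \<open>m\<close> is isotropic
  and the generators pairing positively with \<open>m\<close> carry a large weight, or that weight is small; in
  the last case the bounds \<open>-v\<^sup>2 < c\<close> and \<open>\<langle>v, m\<rangle> \<in> \<int>\<close> force \<open>\<langle>v, m\<rangle> = 0\<close>. In every case \<open>v\<close> is
  orthogonal to a combination \<open>w\<close> of the generators with coefficients in \<open>[0, 1]\<close> and with \<open>w\<^sup>2\<close>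
  bounded below by a constant depending only on \<open>\<Pi>\<close> and \<open>c\<close>. As \<open>w\<^sup>\<perp>\<close> is negative definite, this
  bounds the integral coordinates of \<open>B v\<close>, leaving finitely many walls. Finally \<open>\<Pi> \<inter> \<P>\<^sub>L\<close> is connected, so a
  chamber meeting it is determined by its signs on those walls.
\<close>

section \<open>Bilinear forms, signature and lattice points\<close>

lemma bform_zero [simp]: "bform B 0 z = 0" "bform B z 0 = 0"
  by (simp_all add: bform_def)

lemma bform_add_left: "bform B (x + y) z = bform B x z + bform B y z"
  by (simp add: bform_def inner_add_left)

lemma bform_diff_left: "bform B (x - y) z = bform B x z - bform B y z"
  by (simp add: bform_def inner_diff_left)

lemma bform_scaleR_left: "bform B (a *\<^sub>R x) z = a * bform B x z"
  by (simp add: bform_def)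

lemma bform_sum_left: "bform B (\<Sum>s\<in>S. f s) z = (\<Sum>s\<in>S. bform B (f s) z)"
  by (simp add: bform_def inner_sum_left)

lemma bform_add_right: "bform B z (x + y) = bform B z x + bform B z y"
  by (simp add: bform_def matrix_vector_right_distrib inner_add_right)

lemma bform_diff_right: "bform B z (x - y) = bform B z x - bform B z y"
  by (simp add: bform_def matrix_vector_mult_diff_distrib inner_diff_right)

lemma bform_scaleR_right: "bform B z (a *\<^sub>R x) = a * bform B z x"
  by (simp add: bform_def matrix_vector_mult_scaleR)

lemma bform_sum_right: "bform B z (\<Sum>s\<in>S. f s) = (\<Sum>s\<in>S. bform B z (f s))"
  by (induction S rule: infinite_finite_induct) (simp_all add: bform_add_right)

lemmas bform_linear =
  bform_add_left bform_diff_left bform_scaleR_left bform_sum_left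
  bform_add_right bform_diff_right bform_scaleR_right bform_sum_right

lemma bform_commute: "transpose B = B \<Longrightarrow> bform B x y = bform B y x"
  by (metis bform_def dot_lmul_matrix inner_commute vector_transpose_matrix)

lemma continuous_on_bform [continuous_intros]:
  "continuous_on T f \<Longrightarrow> continuous_on T g \<Longrightarrow> continuous_on T (\<lambda>x. bform B (f x) (g x))"
  unfolding bform_def
  by (intro continuous_on_inner bounded_linear.continuous_on[OF matrix_vector_mul_bounded_linear])

lemma bform_axis_left: "bform B (axis i 1) v = (B *v v) $ i"
  by (simp add: bform_def inner_axis')

lemma minkowski_orthogonal_negative:
  fixes a b :: "real^'n" and i0 :: 'n
  defines "J \<equiv> (\<chi> i j. if i = j then (if i = i0 then 1 else -1) else 0) :: real^'n^'n"
  assumes aa: "a \<bullet> (J *v a) > 0" and ab: "a \<bullet> (J *v b) = 0" and "b \<noteq> 0"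
  shows "b \<bullet> (J *v b) < 0"
proof -
  define spatial where "spatial x = (\<chi> i. if i = i0 then 0 else x$i)" for x :: "real^'n"
  have J: "x \<bullet> (J *v y) = x$i0 * y$i0 - spatial x \<bullet> spatial y" for x y
  proof -
    have Jy: "(J *v y)$i = (if i = i0 then y$i else - y$i)" for i
      by (simp add: J_def matrix_vector_mult_def if_distrib[of "\<lambda>t. t * _"] cong: if_cong)
    have "x \<bullet> (J *v y) = (\<Sum>i\<in>UNIV. (if i = i0 then x$i * y$i else 0) - (if i = i0 then 0 else x$i * y$i))"
      unfolding inner_vec_def by (rule sum.cong) (auto simp: Jy)
    also have "\<dots> = x$i0 * y$i0 - spatial x \<bullet> spatial y"
      unfolding sum_subtractf inner_vec_def spatial_def
      by (simp add: if_distrib[of "\<lambda>t. t * _"] cong: if_cong)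
    finally show ?thesis .
  qed
  have a1: "spatial a \<bullet> spatial a < (a$i0)^2" using aa J[of a a] by (simp add: power2_eq_square)
  have a2: "a$i0 * b$i0 = spatial a \<bullet> spatial b" using ab J[of a b] by simp
  show ?thesis
  proof (cases "spatial b = 0")
    case True
    have "a$i0 \<noteq> 0" using a1 by (metis inner_ge_zero less_le_not_le power_zero_numeral)
    with True a2 have "b$i0 = 0" by simp
    with True have "b = 0" by (auto simp: vec_eq_iff spatial_def) metis
    with \<open>b \<noteq> 0\<close> show ?thesis by simp
  next
    case False
    have "(b$i0)^2 < spatial b \<bullet> spatial b"
    proof (rule ccontr)
      assume "\<not> ?thesis"
      then have le: "spatial b \<bullet> spatial b \<le> (b$i0)^2" by simp
      with False have "(b$i0)^2 > 0" by (metis inner_gt_zero_iff order.strict_trans2)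
      have "(spatial a \<bullet> spatial b)^2 \<le> (spatial a \<bullet> spatial a) * (spatial b \<bullet> spatial b)"
        by (rule Cauchy_Schwarz_ineq)
      also have "\<dots> \<le> (spatial a \<bullet> spatial a) * (b$i0)^2"
        using le by (intro mult_left_mono) auto
      also have "\<dots> < (a$i0)^2 * (b$i0)^2"
        using a1 \<open>(b$i0)^2 > 0\<close> by (intro mult_strict_right_mono)
      also have "\<dots> = (spatial a \<bullet> spatial b)^2"
        using a2 by (simp add: power_mult_distrib[symmetric])
      finally show False by simp
    qed
    then show ?thesis using J[of b b] by (simp add: power2_eq_square)
  qed
qed

lemma sylvester_orthogonal_negative:
  fixes B P :: "real^'n^'n" and i0 :: 'n
  assumes "invertible P"
    and P: "transpose P ** B ** P = (\<chi> i j. if i = j then (if i = i0 then 1 else -1) else 0)"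
    and "bform B x x > 0" "bform B x y = 0" "y \<noteq> 0"
  shows "bform B y y < 0"
proof -
  define J where "J = ((\<chi> i j. if i = j then (if i = i0 then 1 else -1) else 0) :: real^'n^'n)"
  obtain Q where Q: "P ** Q = mat 1" using \<open>invertible P\<close> by (auto simp: invertible_def)
  have transfer: "bform B (P *v a) (P *v b) = a \<bullet> (J *v b)" for a b
  proof -
    have "bform B (P *v a) (P *v b) = (a v* transpose P) \<bullet> (B *v (P *v b))"
      by (simp add: bform_def transpose_matrix_vector[symmetric])
    also have "\<dots> = a \<bullet> (transpose P *v (B *v (P *v b)))" by (rule dot_lmul_matrix)
    also have "\<dots> = a \<bullet> ((transpose P ** B ** P) *v b)"
      by (simp add: matrix_vector_mul_assoc matrix_mul_assoc)
    finally show ?thesis using P by (simp add: J_def)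
  qed
  have PQ: "P *v (Q *v z) = z" for z using Q by (simp add: matrix_vector_mul_assoc)
  have "(Q *v x) \<bullet> (J *v (Q *v x)) > 0" "(Q *v x) \<bullet> (J *v (Q *v y)) = 0"
    using assms(3,4) transfer PQ by metis+
  moreover have "Q *v y \<noteq> 0" using \<open>y \<noteq> 0\<close> PQ by (metis matrix_vector_mult_0_right)
  ultimately have "(Q *v y) \<bullet> (J *v (Q *v y)) < 0"
    unfolding J_def by (rule minkowski_orthogonal_negative)
  then show ?thesis using transfer PQ by metis
qed

lemma connected_nonvanishing_pos:
  fixes f :: "'a::topological_space \<Rightarrow> real"
  assumes "connected T" "continuous_on T f" "0 \<notin> f ` T" "x \<in> T" "y \<in> T" "f x > 0"
  shows "f y > 0"
proof (rule ccontr)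
  assume "\<not> f y > 0"
  moreover have "connected (f ` T)" using assms(2,1) by (rule connected_continuous_image)
  ultimately have "0 \<in> f ` T"
    using assms(4-6) unfolding connected_iff_interval by (meson imageI less_imp_le not_less)
  with assms(3) show False ..
qed

lemma convex_nonneg_combinations:
  "convex {\<Sum>v\<in>S. c v *\<^sub>R v | c. \<forall>v\<in>S. c v \<ge> (0::real)}"
  unfolding convex_def
proof (intro ballI allI impI)
  fix x y and a b :: real
  assume "x \<in> {\<Sum>v\<in>S. c v *\<^sub>R v | c. \<forall>v\<in>S. c v \<ge> 0}" "y \<in> {\<Sum>v\<in>S. c v *\<^sub>R v | c. \<forall>v\<in>S. c v \<ge> 0}"
    and ab: "0 \<le> a" "0 \<le> b" "a + b = 1"
  then obtain c1 c2 where c: "x = (\<Sum>v\<in>S. c1 v *\<^sub>R v)" "\<forall>v\<in>S. c1 v \<ge> 0"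
    "y = (\<Sum>v\<in>S. c2 v *\<^sub>R v)" "\<forall>v\<in>S. c2 v \<ge> 0" by blast
  have "a *\<^sub>R x + b *\<^sub>R y = (\<Sum>v\<in>S. (a * c1 v + b * c2 v) *\<^sub>R v)"
    by (simp add: c scaleR_sum_right sum.distrib[symmetric] scaleR_add_left)
  moreover have "\<forall>v\<in>S. a * c1 v + b * c2 v \<ge> 0" using c ab by simp
  ultimately show "a *\<^sub>R x + b *\<^sub>R y \<in> {\<Sum>v\<in>S. c v *\<^sub>R v | c. \<forall>v\<in>S. c v \<ge> 0}"
    by (intro CollectI exI[of _ "\<lambda>v. a * c1 v + b * c2 v"]) simp
qed

lemma Ints_square_less_one_eq_zero:
  fixes x :: real
  assumes "x \<in> \<int>" "x^2 < 1"
  shows "x = 0"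
proof -
  obtain k where k: "x = of_int k" using assms(1) by (rule Ints_cases)
  have "\<bar>x\<bar> < 1" using assms(2) by (simp add: abs_square_less_1)
  with k show ?thesis by simp
qed

lemma finite_bounded_integer_vectors:
  fixes R :: "'n::finite \<Rightarrow> real"
  shows "finite {z :: real^'n. \<forall>i. z$i \<in> \<int> \<and> \<bar>z$i\<bar> \<le> R i}"
proof -
  define F where "F i = {-\<lceil>R i\<rceil>..\<lceil>R i\<rceil>}" for i
  have "{z :: real^'n. \<forall>i. z$i \<in> \<int> \<and> \<bar>z$i\<bar> \<le> R i} \<subseteq> (\<lambda>f. \<chi> i. of_int (f i)) ` Pi\<^sub>E UNIV F"
  proof
    fix z :: "real^'n" assume z: "z \<in> {z. \<forall>i. z$i \<in> \<int> \<and> \<bar>z$i\<bar> \<le> R i}"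
    define f where "f i = \<lfloor>z$i\<rfloor>" for i
    have zf: "z$i = of_int (f i)" for i using z by (auto simp: f_def elim!: Ints_cases)
    have "\<bar>f i\<bar> \<le> \<lceil>R i\<rceil>" for i
    proof -
      have "of_int \<bar>f i\<bar> \<le> R i" using z zf[of i] by (metis (mono_tags) mem_Collect_eq of_int_abs)
      then show ?thesis by (metis ceiling_mono ceiling_of_int)
    qed
    then have "f \<in> Pi\<^sub>E UNIV F" unfolding F_def by (auto simp: abs_le_iff) (metis minus_le_iff)
    moreover have "z = (\<chi> i. of_int (f i))" using zf by (simp add: vec_eq_iff)
    ultimately show "z \<in> (\<lambda>f. \<chi> i. of_int (f i)) ` Pi\<^sub>E UNIV F" by blast
  qed
  moreover have "finite (Pi\<^sub>E UNIV F)" by (rule finite_PiE) (auto simp: F_def)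
  ultimately show ?thesis by (meson finite_imageI finite_subset)
qed

section \<open>The positive cone and the chambers\<close>

locale lorentzian_form =
  fixes B :: "real^'n^'n" and h :: "real^'n"
  assumes symmetric: "transpose B = B"
    and orthogonal_negative: "\<lbrakk>bform B x x > 0; bform B x y = 0; y \<noteq> 0\<rbrakk> \<Longrightarrow> bform B y y < 0"
    and timelike_h: "bform B h h > 0"
begin

abbreviation q where "q \<equiv> bform B"

lemma q_commute: "q x y = q y x"
  using symmetric by (rule bform_commute)

lemma orthogonal_nonpos: "q x x > 0 \<Longrightarrow> q x y = 0 \<Longrightarrow> q y y \<le> 0"
  using orthogonal_negative[of x y] by (cases "y = 0") auto

lemma orthogonal_correction:
  fixes w y z :: "real^'n"
  assumes "q w w \<noteq> 0"
  defines "y' \<equiv> y - (q w y / q w w) *\<^sub>R w"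
  shows "q w y' = 0" "q y' y' = q y y - (q w y)^2 / q w w"
    and "q z w = 0 \<Longrightarrow> q z y' = q z y"
proof -
  show wy': "q w y' = 0" using assms(1) by (simp add: y'_def bform_linear)
  have "q y' y' = q y y' - (q w y / q w w) * q w y'"
    by (subst (1) y'_def) (simp only: bform_diff_left bform_scaleR_left)
  also have "\<dots> = q y y'" by (simp add: wy')
  also have "\<dots> = q y y - (q w y / q w w) * q y w" by (simp add: y'_def bform_linear)
  finally show "q y' y' = q y y - (q w y)^2 / q w w" by (simp add: q_commute[of y w] power2_eq_square)
  show "q z w = 0 \<Longrightarrow> q z y' = q z y" by (simp add: y'_def bform_linear)
qed

lemma reverse_Cauchy_Schwarz:
  assumes "q x x > 0"
  shows "q x x * q y y \<le> (q x y)^2"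
proof -
  define y' where "y' = y - (q x y / q x x) *\<^sub>R x"
  have "q y' y' \<le> 0"
    using orthogonal_nonpos[OF assms] orthogonal_correction(1)[where w = x and y = y] assms by (simp add: y'_def)
  then have "q y y - (q x y)^2 / q x x \<le> 0"
    using orthogonal_correction(2)[where w = x and y = y] assms by (simp add: y'_def)
  with assms show ?thesis by (simp add: pos_le_divide_eq mult.commute)
qed

lemma Cauchy_Schwarz_orthogonal:
  assumes "q w w > 0" "q a w = 0" "q b w = 0"
  shows "(q a b)^2 \<le> q a a * q b b"
proof (cases "b = 0")
  case False
  have bb: "q b b < 0" using orthogonal_negative[OF assms(1), of b] False assms(3) q_commute by metis
  define a' where "a' = a - (q b a / q b b) *\<^sub>R b"
  have "q w a' = 0" using assms(2,3) by (simp add: a'_def bform_linear q_commute[of w])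
  then have "q a' a' \<le> 0" using orthogonal_nonpos[OF assms(1)] by blast
  then have "q a a - (q b a)^2 / q b b \<le> 0"
    using orthogonal_correction(2)[where w = b and y = a] bb by (simp add: a'_def)
  with bb have "0 \<le> (q a a - (q b a)^2 / q b b) * q b b" by (simp add: mult_nonpos_nonpos)
  with bb show ?thesis by (simp add: left_diff_distrib q_commute[of b a])
qed simp

lemma timelike_pairing_nonzero: "q x x > 0 \<Longrightarrow> q y y > 0 \<Longrightarrow> q x y \<noteq> 0"
  using reverse_Cauchy_Schwarz[of x y] by (metis mult_pos_pos not_le power2_eq_square mult_zero_left)

definition future_cone :: "(real^'n) set" where
  "future_cone = {x. q x x > 0 \<and> q x h > 0}"

lemma h_in_future_cone: "h \<in> future_cone"
  using timelike_h by (simp add: future_cone_def)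

lemma future_cone_pairing_pos:
  assumes "x \<in> future_cone" "y \<in> future_cone"
  shows "q x y > 0"
proof (rule ccontr)
  assume "\<not> q x y > 0"
  have x: "q x x > 0" "q x h > 0" and y: "q y y > 0" "q h y > 0"
    using assms by (auto simp: future_cone_def q_commute[of h])
  then have "q x y < 0" using \<open>\<not> q x y > 0\<close> timelike_pairing_nonzero by force
  define t where "t = - q x y / q h y"
  have "t > 0" using \<open>q x y < 0\<close> y by (simp add: t_def divide_neg_pos)
  have "q (x + t *\<^sub>R h) y = 0" using y by (simp add: t_def bform_linear)
  moreover have "q (x + t *\<^sub>R h) (x + t *\<^sub>R h) > 0"
    using x \<open>t > 0\<close> timelike_h
    by (simp add: bform_linear q_commute[of h x] add_pos_pos)
  ultimately show False using timelike_pairing_nonzero y by blast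
qed

lemma convex_future_cone: "convex future_cone"
  unfolding convex_def
proof (intro ballI allI impI)
  fix x y and a b :: real
  assume x: "x \<in> future_cone" and y: "y \<in> future_cone" and ab: "0 \<le> a" "0 \<le> b" "a + b = 1"
  have pos: "q x x > 0" "q x h > 0" "q y y > 0" "q y h > 0" "q x y > 0"
    using x y future_cone_pairing_pos[OF x y] by (simp_all add: future_cone_def)
  have "0 < a^2 * q x x + b^2 * q y y \<and> 0 < a * q x h + b * q y h"
  proof (cases "a > 0")
    case True
    then show ?thesis using pos ab by (simp add: add_pos_nonneg)
  next
    case False
    then have "b = 1" using ab by simp
    with False ab pos show ?thesis by simp
  qed
  moreover have "0 \<le> 2 * a * b * q x y" using ab pos by simp
  ultimately have "q (a *\<^sub>R x + b *\<^sub>R y) (a *\<^sub>R x + b *\<^sub>R y) > 0 \<and> q (a *\<^sub>R x + b *\<^sub>R y) h > 0"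
    by (simp add: bform_linear q_commute[of y x] power2_eq_square algebra_simps)
  then show "a *\<^sub>R x + b *\<^sub>R y \<in> future_cone" by (simp add: future_cone_def)
qed

lemma pos_cone_eq_future_cone: "pos_cone B h = future_cone"
proof
  show "future_cone \<subseteq> pos_cone B h"
    unfolding pos_cone_def
    by (rule connected_component_maximal[OF h_in_future_cone convex_connected[OF convex_future_cone]])
      (auto simp: future_cone_def)
next
  show "pos_cone B h \<subseteq> future_cone"
  proof
    fix y assume y: "y \<in> pos_cone B h"
    let ?T = "connected_component_set {x. q x x > 0} h"
    have T: "?T \<subseteq> {x. q x x > 0}" by (rule connected_component_subset)
    have "q y h > 0"
    proof (rule connected_nonvanishing_pos[of ?T "\<lambda>x. q x h" h])
      show "continuous_on ?T (\<lambda>x. q x h)" by (intro continuous_intros)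
      show "0 \<notin> (\<lambda>x. q x h) ` ?T" using T timelike_pairing_nonzero timelike_h by fastforce
    qed (use y timelike_h in \<open>simp_all add: pos_cone_def\<close>)
    with y T show "y \<in> future_cone" by (auto simp: future_cone_def pos_cone_def)
  qed
qed

lemma closure_future_cone_square_nonneg: "s \<in> closure future_cone \<Longrightarrow> q s s \<ge> 0"
  by (rule continuous_ge_on_closure[where f = "\<lambda>s. q s s"])
    (auto simp: future_cone_def intro!: continuous_intros)

lemma future_cone_closure_pairing_nonneg:
  "x \<in> future_cone \<Longrightarrow> s \<in> closure future_cone \<Longrightarrow> q x s \<ge> 0"
  by (rule continuous_ge_on_closure[where f = "q x"])
    (auto simp: future_cone_pairing_pos less_imp_le intro!: continuous_intros)

lemma closure_future_cone_pairing_nonneg: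
  "s \<in> closure future_cone \<Longrightarrow> t \<in> closure future_cone \<Longrightarrow> q s t \<ge> 0"
  by (rule continuous_ge_on_closure[where f = "q s"])
    (auto simp: q_commute[of s] future_cone_closure_pairing_nonneg intro!: continuous_intros)

lemma future_cone_closure_pairing_pos:
  assumes "x \<in> future_cone" "s \<in> closure future_cone" "s \<noteq> 0"
  shows "q x s > 0"
proof -
  have "q x s \<noteq> 0"
    using orthogonal_negative[of x s] closure_future_cone_square_nonneg[of s] assms
    by (force simp: future_cone_def)
  with future_cone_closure_pairing_nonneg[OF assms(1,2)] show ?thesis by simp
qed

lemma closure_future_cone_orthogonal_proportional:
  assumes u: "u \<in> closure future_cone" "u \<noteq> 0" and z: "z \<in> closure future_cone"
    and "q u z = 0"
  shows "z = (q z h / q u h) *\<^sub>R u"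
proof (rule ccontr)
  define d where "d = z - (q z h / q u h) *\<^sub>R u"
  assume "z \<noteq> (q z h / q u h) *\<^sub>R u"
  then have "d \<noteq> 0" by (simp add: d_def)
  have "q u h > 0" using future_cone_closure_pairing_pos[OF h_in_future_cone u] q_commute by metis
  then have "q h d = 0" by (simp add: d_def bform_linear q_commute[of h])
  then have "q d d < 0" using orthogonal_negative[OF timelike_h] \<open>d \<noteq> 0\<close> by blast
  moreover have "q d d = q z z + (q z h / q u h)^2 * q u u"
    using \<open>q u z = 0\<close> by (simp add: d_def bform_linear q_commute[of z u] power2_eq_square)
  moreover have "q z z \<ge> 0" "q u u \<ge> 0" using closure_future_cone_square_nonneg u z by auto
  ultimately show False by (smt (verit) zero_le_power2 mult_nonneg_nonneg)
qed

lemma orthogonal_pairing_square_le: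
  assumes "q w w > 0" "q v w = 0" "- q v v \<le> N"
  shows "(q v e)^2 \<le> N * ((q w e)^2 / q w w - q e e)"
proof -
  define e' where "e' = e - (q w e / q w w) *\<^sub>R w"
  have "q e' w = 0"
    using orthogonal_correction(1)[where w = w and y = e] assms(1) q_commute by (simp add: e'_def)
  then have "(q v e')^2 \<le> q v v * q e' e'"
    using Cauchy_Schwarz_orthogonal[OF assms(1,2)] by blast
  moreover have "q v e' = q v e" "q e' e' = q e e - (q w e)^2 / q w w"
    using orthogonal_correction(2)[where w = w and y = e]
      orthogonal_correction(3)[where w = w and y = e and z = v] assms(1,2)
    by (simp_all add: e'_def)
  ultimately have "(q v e)^2 \<le> - q v v * ((q w e)^2 / q w w - q e e)"
    by (simp add: algebra_simps)
  also have "\<dots> \<le> N * ((q w e)^2 / q w w - q e e)"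
  proof (rule mult_right_mono[OF assms(3)])
    show "0 \<le> (q w e)^2 / q w w - q e e"
      using reverse_Cauchy_Schwarz[OF assms(1), of e] assms(1) by (simp add: pos_le_divide_eq mult.commute)
  qed
  finally show ?thesis .
qed

definition wall_complement :: "(real^'n) set \<Rightarrow> (real^'n) set" where
  "wall_complement V = future_cone - (\<Union>v\<in>V. perp_hyp B h v)"

lemma wall_complement_iff: "y \<in> wall_complement V \<longleftrightarrow> y \<in> future_cone \<and> (\<forall>v\<in>V. q y v \<noteq> 0)"
  by (auto simp: wall_complement_def perp_hyp_def pos_cone_eq_future_cone)

lemma chambers_eq_components:
  "chambers B h V = {closure (connected_component_set (wall_complement V) x) \<inter> future_cone
    | x. x \<in> wall_complement V}"
  by (simp add: chambers_def wall_complement_def pos_cone_eq_future_cone)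

lemma connected_same_sign:
  assumes "connected P" "\<forall>x\<in>P. q x v \<noteq> 0" "z \<in> P" "z' \<in> P"
  shows "q z v > 0 \<longleftrightarrow> q z' v > 0"
proof -
  have "q b v > 0" if "a \<in> P" "b \<in> P" "q a v > 0" for a b
    by (rule connected_nonvanishing_pos[where f = "\<lambda>x. q x v", OF assms(1) _ _ that])
      (use assms(2) in \<open>auto intro!: continuous_intros\<close>)
  with assms(3,4) show ?thesis by blast
qed

lemma component_same_sign:
  assumes "y \<in> connected_component_set (wall_complement V) x" "v \<in> V"
  shows "q y v > 0 \<longleftrightarrow> q x v > 0"
proof (rule connected_same_sign)
  show "\<forall>z\<in>connected_component_set (wall_complement V) x. q z v \<noteq> 0"
    using connected_component_subset assms(2) by (fastforce simp: wall_complement_iff)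
  show "x \<in> connected_component_set (wall_complement V) x"
    using assms(1) connected_component_in by fastforce
qed (use assms(1) in simp_all)

lemma closure_component_same_sign:
  assumes "x \<in> wall_complement V" "z \<in> closure (connected_component_set (wall_complement V) x)"
    and "v \<in> V" "q z v \<noteq> 0"
  shows "q z v > 0 \<longleftrightarrow> q x v > 0"
proof (cases "q x v > 0")
  case True
  have "0 \<le> q z v"
  proof (rule continuous_ge_on_closure[where f = "\<lambda>y. q y v", OF _ assms(2)])
    fix y assume "y \<in> connected_component_set (wall_complement V) x"
    with component_same_sign[OF this assms(3)] True show "0 \<le> q y v" by simp
  qed (intro continuous_intros)
  with assms(4) True show ?thesis by simp
next
  case False
  have "q z v \<le> 0"
  proof (rule continuous_le_on_closure[where f = "\<lambda>y. q y v", OF _ assms(2)])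
    fix y assume "y \<in> connected_component_set (wall_complement V) x"
    with component_same_sign[OF this assms(3)] False show "q y v \<le> 0" by simp
  qed (intro continuous_intros)
  with False show ?thesis by simp
qed

lemma component_eq_if_same_signs:
  assumes "x1 \<in> wall_complement V" "x2 \<in> wall_complement V"
    and same: "\<forall>v\<in>V. q x1 v > 0 \<longleftrightarrow> q x2 v > 0"
  shows "connected_component_set (wall_complement V) x1 = connected_component_set (wall_complement V) x2"
proof -
  have "closed_segment x1 x2 \<subseteq> wall_complement V"
  proof
    fix y assume "y \<in> closed_segment x1 x2"
    then obtain u :: real where u: "0 \<le> u" "u \<le> 1" and y: "y = (1 - u) *\<^sub>R x1 + u *\<^sub>R x2"
      by (auto simp: closed_segment_def)
    have "y \<in> future_cone"
      unfolding y by (rule convexD[OF convex_future_cone]) (use assms(1,2) u in \<open>auto simp: wall_complement_iff\<close>)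
    moreover have "q y v \<noteq> 0" if v: "v \<in> V" for v
    proof -
      have "q x1 v \<noteq> 0" "q x2 v \<noteq> 0" using assms(1,2) v by (auto simp: wall_complement_iff)
      then consider "q x1 v > 0" "q x2 v > 0" | "q x1 v < 0" "q x2 v < 0"
        using same v by (cases "q x1 v > 0") auto
      then show ?thesis
      proof cases
        case 1
        then have "(1 - u) * (- q x1 v) + u * (- q x2 v) < 0"
          using u by (intro convex_bound_lt) auto
        then show ?thesis by (simp add: y bform_linear)
      next
        case 2
        then have "(1 - u) * q x1 v + u * q x2 v < 0"
          using u by (intro convex_bound_lt) auto
        then show ?thesis by (simp add: y bform_linear)
      qed
    qed
    ultimately show "y \<in> wall_complement V" by (simp add: wall_complement_iff)
  qed
  then have "closed_segment x1 x2 \<subseteq> connected_component_set (wall_complement V) x1"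
    by (intro connected_component_maximal) auto
  then have "x2 \<in> connected_component_set (wall_complement V) x1" by auto
  then show ?thesis by (rule connected_component_eq[symmetric])
qed

text \<open>Only the finitely many walls in \<open>W\<close> cut through \<open>P\<close>, so a chamber meeting \<open>P\<close> is
  determined by its signs on \<open>W\<close>.\<close>

lemma finite_chambers_meeting_connected:
  assumes "finite W" "connected P"
    and avoid: "\<forall>v\<in>V - W. \<forall>x\<in>P. q x v \<noteq> 0"
  shows "finite {D \<in> chambers B h V. D \<inter> P \<noteq> {}}"
proof -
  let ?U = "wall_complement V"
  let ?C = "connected_component_set ?U"
  let ?chambers = "{D \<in> chambers B h V. D \<inter> P \<noteq> {}}"
  define base where "base D = (SOME x. x \<in> ?U \<and> D = closure (?C x) \<inter> future_cone)" for D
  define signs where "signs x = {v \<in> W. q x v > 0}" for x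
  have base: "base D \<in> ?U" "D = closure (?C (base D)) \<inter> future_cone" if "D \<in> chambers B h V" for D
    using someI_ex[of "\<lambda>x. x \<in> ?U \<and> D = closure (?C x) \<inter> future_cone"] that
    unfolding chambers_eq_components base_def by blast+
  have P_sign: "q z v > 0 \<longleftrightarrow> q z' v > 0" if "z \<in> P" "z' \<in> P" "v \<in> V - W" for z z' v
    using connected_same_sign[OF assms(2) _ that(1,2)] avoid that(3) by blast
  have "inj_on (signs \<circ> base) ?chambers"
  proof (rule inj_onI)
    fix D1 D2 assume D1: "D1 \<in> ?chambers" and D2: "D2 \<in> ?chambers"
      and eq: "(signs \<circ> base) D1 = (signs \<circ> base) D2"
    obtain z1 z2 where z: "z1 \<in> P" "z1 \<in> closure (?C (base D1))" "z2 \<in> P" "z2 \<in> closure (?C (base D2))"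
      using base D1 D2 by blast
    have b: "base D1 \<in> ?U" "base D2 \<in> ?U" using base D1 D2 by blast+
    have "?C (base D1) = ?C (base D2)"
    proof (rule component_eq_if_same_signs[OF b], intro ballI)
      fix v assume v: "v \<in> V"
      show "q (base D1) v > 0 \<longleftrightarrow> q (base D2) v > 0"
      proof (cases "v \<in> W")
        case True
        with eq show ?thesis by (auto simp: signs_def set_eq_iff)
      next
        case False
        then have "q z1 v \<noteq> 0" "q z2 v \<noteq> 0" using avoid v z by auto
        with closure_component_same_sign[OF b(1) z(2) v] closure_component_same_sign[OF b(2) z(4) v]
          P_sign[OF z(1,3)] v False
        show ?thesis by blast
      qed
    qed
    then show "D1 = D2" using base(2) D1 D2 by (metis (no_types, lifting) mem_Collect_eq)
  qed
  moreover have "(signs \<circ> base) ` ?chambers \<subseteq> Pow W" by (auto simp: signs_def)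
  moreover have "finite (Pow W)" using assms(1) by simp
  ultimately show ?thesis by (rule inj_on_finite)
qed

end

lemma lorentzian_form_if_even_hyperbolic:
  fixes B :: "real^'n^'n"
  assumes "even_hyperbolic B" "bform B h h > 0"
  shows "lorentzian_form B h"
proof
  obtain P :: "real^'n^'n" and i0 where "invertible P"
    and "transpose P ** B ** P = (\<chi> i j. if i = j then (if i = i0 then 1 else -1) else 0)"
    using assms(1) unfolding even_hyperbolic_def by blast
  then show "bform B y y < 0" if "bform B x x > 0" "bform B x y = 0" "y \<noteq> 0" for x y
    using that by (rule sylvester_orthogonal_negative)
qed (use assms in \<open>auto simp: even_hyperbolic_def\<close>)

section \<open>Walls meeting a rational polyhedral cone\<close>

text \<open>\<open>S\<close> is the set of generators of \<open>\<Pi>\<close> and \<open>N\<close> the constant of (V1).\<close>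

locale cone_with_bounded_walls = lorentzian_form B h for B :: "real^'n^'n" and h +
  fixes S :: "(real^'n) set" and N :: real
  assumes finite_S: "finite S" and S_closure: "S \<subseteq> closure future_cone"
    and S_lat: "S \<subseteq> lat" and zero_notin_S: "0 \<notin> S"
    and N_pos: "N > 0"
begin

abbreviation comb :: "(real^'n \<Rightarrow> real) \<Rightarrow> real^'n" where
  "comb c \<equiv> \<Sum>s\<in>S. c s *\<^sub>R s"

abbreviation unit_coeffs :: "(real^'n \<Rightarrow> real) \<Rightarrow> bool" where
  "unit_coeffs c \<equiv> \<forall>s\<in>S. 0 \<le> c s \<and> c s \<le> 1"

lemma q_comb_left: "q (comb c) y = (\<Sum>s\<in>S. c s * q s y)"
  by (simp add: bform_linear)

lemma q_comb_right: "q y (comb c) = (\<Sum>s\<in>S. c s * q y s)"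
  by (simp add: bform_linear)

lemma q_comb_nonneg:
  assumes "\<forall>s\<in>S. c s \<ge> 0" "y \<in> closure future_cone"
  shows "q y (comb c) \<ge> 0"
  unfolding q_comb_right using assms S_closure
  by (intro sum_nonneg mult_nonneg_nonneg) (auto intro: closure_future_cone_pairing_nonneg)

lemma q_comb_square_ge:
  assumes "\<forall>s\<in>S. c s \<ge> 0" "m \<in> S"
  shows "c m * q m (comb c) \<le> q (comb c) (comb c)"
  unfolding q_comb_left[of c] using assms S_closure finite_S
  by (intro member_le_sum mult_nonneg_nonneg q_comb_nonneg) auto

lemma abs_q_comb_le:
  assumes "unit_coeffs c"
  shows "\<bar>q (comb c) e\<bar> \<le> (\<Sum>s\<in>S. \<bar>q s e\<bar>)"
proof -
  have "\<bar>q (comb c) e\<bar> \<le> (\<Sum>s\<in>S. \<bar>c s * q s e\<bar>)"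
    unfolding q_comb_left by (rule sum_abs)
  also have "\<dots> \<le> (\<Sum>s\<in>S. \<bar>q s e\<bar>)"
    using assms by (intro sum_mono) (simp add: abs_mult mult_left_le_one_le)
  finally show ?thesis .
qed

definition min_pairing :: real where
  "min_pairing = Min (insert 1 {q s t | s t. s \<in> S \<and> t \<in> S \<and> q s t > 0})"

definition pairing_bound :: real where
  "pairing_bound = (\<Sum>t\<in>S. \<Sum>s\<in>S. \<bar>q s t\<bar>)"

lemma finite_pairings: "finite {q s t | s t. s \<in> S \<and> t \<in> S \<and> q s t > 0}"
proof -
  have "{q s t | s t. s \<in> S \<and> t \<in> S \<and> q s t > 0} \<subseteq> (\<lambda>(s, t). q s t) ` (S \<times> S)" by auto
  then show ?thesis using finite_S by (meson finite_SigmaI finite_imageI finite_subset)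
qed

lemma min_pairing_pos: "min_pairing > 0"
  using finite_pairings by (auto simp: min_pairing_def)

lemma min_pairing_le: "s \<in> S \<Longrightarrow> t \<in> S \<Longrightarrow> q s t > 0 \<Longrightarrow> min_pairing \<le> q s t"
  unfolding min_pairing_def using finite_pairings by (intro Min_le) auto

lemma abs_q_comb_le_pairing_bound:
  assumes "unit_coeffs c" "t \<in> S"
  shows "\<bar>q (comb c) t\<bar> \<le> pairing_bound"
proof -
  have "(\<Sum>s\<in>S. \<bar>q s t\<bar>) \<le> pairing_bound"
    unfolding pairing_bound_def using assms(2) finite_S
    by (intro member_le_sum[where f = "\<lambda>t. \<Sum>s\<in>S. \<bar>q s t\<bar>"] sum_nonneg) auto
  with abs_q_comb_le[OF assms(1)] show ?thesis by (rule order_trans)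
qed

lemma S_pairing_nonneg: "s \<in> S \<Longrightarrow> t \<in> S \<Longrightarrow> q s t \<ge> 0"
  using S_closure by (auto intro: closure_future_cone_pairing_nonneg)

lemma q_comb_eq_partners:
  assumes "s \<in> S"
  shows "q s (comb d) = (\<Sum>t\<in>{t \<in> S. q s t > 0}. d t * q s t)"
  unfolding q_comb_right
  by (rule sum.mono_neutral_right) (use finite_S S_pairing_nonneg[OF assms] in \<open>auto simp: less_le\<close>)

lemma scaleR_future_cone: "r > 0 \<Longrightarrow> x \<in> future_cone \<Longrightarrow> r *\<^sub>R x \<in> future_cone"
  by (simp add: future_cone_def bform_linear)

lemma exists_normalized_coeffs:
  assumes "\<forall>s\<in>S. c s \<ge> 0" "comb c \<in> future_cone"
  obtains c' m r where "unit_coeffs c'" "m \<in> S" "c' m = 1" "r > 0" "comb c' = r *\<^sub>R comb c"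
proof -
  have "S \<noteq> {}" using assms(2) by (auto simp: future_cone_def)
  then have "Max (c ` S) \<in> c ` S" using finite_S by simp
  then obtain m where m: "m \<in> S" "c m = Max (c ` S)" by auto
  then have le: "\<forall>s\<in>S. c s \<le> c m" using finite_S by simp
  have "c m > 0"
  proof (rule ccontr)
    assume "\<not> c m > 0"
    then have "\<forall>s\<in>S. c s = 0" using le assms(1) by (meson antisym not_less order_trans)
    then have "comb c = 0" by simp
    with assms(2) show False by (simp add: future_cone_def)
  qed
  show ?thesis
  proof
    show "unit_coeffs (\<lambda>s. c s / c m)" using le assms(1) \<open>c m > 0\<close> by simp
    show "comb (\<lambda>s. c s / c m) = (1 / c m) *\<^sub>R comb c" by (simp add: scaleR_sum_right)
  qed (use m \<open>c m > 0\<close> in auto)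
qed

definition threshold :: real where
  "threshold = min_pairing / (N * pairing_bound^2 + 1)"

definition width :: real where
  "width = min_pairing * min 1 threshold"

lemma threshold_pos: "threshold > 0"
  using min_pairing_pos N_pos by (simp add: threshold_def add_nonneg_pos)

context
  fixes c :: "real^'n \<Rightarrow> real" and m :: "real^'n"
  assumes c: "unit_coeffs c" "comb c \<in> future_cone" and m: "m \<in> S" "c m = 1"
begin

abbreviation partners :: "(real^'n) set" where
  "partners \<equiv> {t \<in> S. q m t > 0}"

abbreviation weight :: real where
  "weight \<equiv> \<Sum>t\<in>partners. c t"

lemma generator_closure: "m \<in> closure future_cone" "m \<noteq> 0"
  using m S_closure zero_notin_S by auto

lemma q_generator_comb: "q m (comb c) = (\<Sum>t\<in>partners. c t * q m t)"
  using m(1) by (rule q_comb_eq_partners)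

lemma q_generator_comb_pos: "q m (comb c) > 0"
  using future_cone_closure_pairing_pos[OF c(2) generator_closure] q_commute by metis

lemma generator_comb_square_ge: "q m (comb c) \<le> q (comb c) (comb c)"
  using q_comb_square_ge[of c m] c(1) m by simp

lemma generator_timelike_wide:
  assumes "q m m > 0"
  shows "min_pairing \<le> q (comb c) (comb c)"
proof -
  have "c m * q m m \<le> (\<Sum>t\<in>S. c t * q m t)"
    by (rule member_le_sum) (use m c finite_S S_pairing_nonneg[OF m(1)] in auto)
  then have "q m m \<le> q m (comb c)" by (simp add: q_comb_right m(2))
  with min_pairing_le[OF m(1) m(1) assms] generator_comb_square_ge show ?thesis by linarith
qed

lemma min_pairing_weight_le: "min_pairing * weight \<le> q (comb c) (comb c)"
proof -
  have "(\<Sum>t\<in>partners. c t * min_pairing) \<le> (\<Sum>t\<in>partners. c t * q m t)"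
    using c(1) min_pairing_le m(1) by (intro sum_mono mult_left_mono) auto
  moreover have "min_pairing * weight = (\<Sum>t\<in>partners. c t * min_pairing)"
    by (simp add: sum_distrib_left mult.commute)
  ultimately show ?thesis using q_generator_comb generator_comb_square_ge by linarith
qed

lemma weight_pos: "weight > 0"
proof (rule ccontr)
  have fin: "finite partners" using finite_S by simp
  assume "\<not> weight > 0"
  moreover have "weight \<ge> 0" using c(1) by (intro sum_nonneg) auto
  ultimately have "\<forall>t\<in>partners. c t = 0" using c(1) by (subst sum_nonneg_eq_0_iff[OF fin, symmetric]) auto
  then have "q m (comb c) = 0" by (simp add: q_generator_comb)
  with q_generator_comb_pos show False by simp
qed

lemma generator_pairing_square_le:
  assumes "q v (comb c) = 0" "- q v v < N" "t \<in> S"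
  shows "(q v t)^2 \<le> N * pairing_bound^2 / (min_pairing * weight)"
proof -
  let ?x = "comb c"
  have pos: "0 < min_pairing * weight" using min_pairing_pos weight_pos by simp
  have xx: "q ?x ?x > 0" using c(2) by (simp add: future_cone_def)
  have "(q ?x t)^2 \<le> pairing_bound^2"
    using power_mono[OF abs_q_comb_le_pairing_bound[OF c(1) assms(3)] abs_ge_zero, of 2] by simp
  then have frac: "(q ?x t)^2 / q ?x ?x \<le> pairing_bound^2 / (min_pairing * weight)"
    using pos min_pairing_weight_le by (intro frac_le) auto
  have tt: "q t t \<ge> 0" using assms(3) S_closure closure_future_cone_square_nonneg by blast
  have "(q v t)^2 \<le> N * ((q ?x t)^2 / q ?x ?x - q t t)"
    using xx assms(1,2) orthogonal_pairing_square_le[of ?x v N t] q_commute[of v ?x] by simp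
  also have "\<dots> \<le> N * ((q ?x t)^2 / q ?x ?x)"
    using N_pos tt by (intro mult_left_mono) auto
  also have "\<dots> \<le> N * (pairing_bound^2 / (min_pairing * weight))"
    using N_pos frac by (intro mult_left_mono) auto
  finally show ?thesis by simp
qed

lemma non_partner_proportional:
  assumes "t \<in> S - partners"
  shows "t = (q t h / q m h) *\<^sub>R m"
proof (rule closure_future_cone_orthogonal_proportional[OF generator_closure])
  show "t \<in> closure future_cone" using assms S_closure by auto
  show "q m t = 0" using assms S_pairing_nonneg[OF m(1), of t] by auto
qed

lemma q_comb_split:
  "q v (comb c) = q v m * (\<Sum>t\<in>S - partners. c t * (q t h / q m h)) + (\<Sum>t\<in>partners. c t * q v t)"
proof -
  have "q v (comb c) = (\<Sum>t\<in>S - partners. c t * q v t) + (\<Sum>t\<in>partners. c t * q v t)"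
    unfolding q_comb_right by (rule sum.subset_diff) (use finite_S in auto)
  also have "(\<Sum>t\<in>S - partners. c t * q v t) = (\<Sum>t\<in>S - partners. q v m * (c t * (q t h / q m h)))"
    by (rule sum.cong[OF refl], subst non_partner_proportional) (auto simp: bform_linear)
  finally show ?thesis by (simp add: sum_distrib_left)
qed

lemma non_partner_weight_ge:
  assumes "q m m = 0"
  shows "1 \<le> (\<Sum>t\<in>S - partners. c t * (q t h / q m h))"
proof -
  have "q m h > 0"
    using future_cone_closure_pairing_pos[OF h_in_future_cone generator_closure] q_commute by metis
  moreover have "q t h \<ge> 0" if "t \<in> S" for t
    using future_cone_closure_pairing_nonneg[OF h_in_future_cone] that S_closure q_commute by (metis subsetD)
  ultimately have "c m * (q m h / q m h) \<le> (\<Sum>t\<in>S - partners. c t * (q t h / q m h))"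
    using finite_S m c(1) assms by (intro member_le_sum mult_nonneg_nonneg divide_nonneg_pos) auto
  with \<open>q m h > 0\<close> m(2) show ?thesis by simp
qed

lemma abs_q_generator_le:
  assumes "q m m = 0" "q v (comb c) = 0"
  shows "\<bar>q v m\<bar> \<le> (\<Sum>t\<in>partners. c t * \<bar>q v t\<bar>)"
proof -
  let ?L = "\<Sum>t\<in>S - partners. c t * (q t h / q m h)"
  have "\<bar>q v m\<bar> \<le> \<bar>q v m\<bar> * ?L"
    using non_partner_weight_ge[OF assms(1)] by (simp add: mult_le_cancel_left1)
  also have "\<dots> = \<bar>q v m * ?L\<bar>"
    using non_partner_weight_ge[OF assms(1)] by (simp add: abs_mult)
  also have "q v m * ?L = - (\<Sum>t\<in>partners. c t * q v t)"
    using q_comb_split[of v] assms(2) by linarith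
  also have "\<bar>- (\<Sum>t\<in>partners. c t * q v t)\<bar> \<le> (\<Sum>t\<in>partners. \<bar>c t * q v t\<bar>)"
    unfolding abs_minus_cancel by (rule sum_abs)
  also have "\<dots> = (\<Sum>t\<in>partners. c t * \<bar>q v t\<bar>)"
    using c(1) by (intro sum.cong) (auto simp: abs_mult)
  finally show ?thesis .
qed

text \<open>The integrality of \<open>q v m\<close> forces \<open>v\<close> to be orthogonal to an isotropic generator
  \<open>m\<close> once the weight of the partners of \<open>m\<close> is small.\<close>

lemma isotropic_generator_orthogonal:
  assumes "q m m = 0" "q v (comb c) = 0" "v \<in> dual_lat B" "- q v v < N" "weight < threshold"
  shows "q v m = 0"
proof -
  define K where "K = N * pairing_bound^2 / (min_pairing * weight)"
  have K: "K \<ge> 0" using N_pos min_pairing_pos weight_pos by (simp add: K_def)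
  have "\<bar>q v t\<bar> \<le> sqrt K" if "t \<in> S" for t
    using real_sqrt_le_mono[OF generator_pairing_square_le[OF assms(2,4) that]] by (simp add: K_def)
  then have "(\<Sum>t\<in>partners. c t * \<bar>q v t\<bar>) \<le> (\<Sum>t\<in>partners. c t * sqrt K)"
    using c(1) by (intro sum_mono mult_left_mono) auto
  with abs_q_generator_le[OF assms(1,2)] have "\<bar>q v m\<bar> \<le> weight * sqrt K"
    by (simp add: sum_distrib_right)
  then have "(q v m)^2 \<le> (weight * sqrt K)^2"
    by (metis abs_ge_zero power2_abs power_mono)
  also have "\<dots> = weight^2 * K" using K by (simp add: power_mult_distrib)
  also have "\<dots> = weight * (N * pairing_bound^2) / min_pairing"
    using weight_pos min_pairing_pos by (simp add: K_def power2_eq_square)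
  also have "\<dots> < 1"
  proof -
    have "weight * (N * pairing_bound^2 + 1) < min_pairing"
      using assms(5) N_pos by (simp add: threshold_def pos_less_divide_eq add_nonneg_pos)
    with weight_pos min_pairing_pos show ?thesis by (simp add: pos_divide_less_eq algebra_simps)
  qed
  finally have "(q v m)^2 < 1" .
  moreover have "q v m \<in> \<int>" using assms(3) m(1) S_lat by (auto simp: dual_lat_def)
  ultimately show ?thesis by (rule Ints_square_less_one_eq_zero[rotated])
qed

lemma isotropic_wide_comb:
  assumes "q m m = 0" "q v (comb c) = 0" "q v m = 0"
  obtains d where "unit_coeffs d" "min_pairing \<le> q (comb d) (comb d)" "q v (comb d) = 0"
proof
  define d where "d t = (if t = m then 1 else if t \<in> partners then c t / weight else 0)" for t
  have fin: "finite partners" using finite_S by simp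
  have "m \<notin> partners" using assms(1) by simp
  then have d_partners: "d t = c t / weight" if "t \<in> partners" for t
    using that by (auto simp: d_def)
  have "c t \<le> weight" if "t \<in> partners" for t
    using that c(1) fin by (intro member_le_sum) auto
  then show "unit_coeffs d" using c(1) weight_pos by (auto simp: d_def)
  have "q v t = 0" if "t \<in> S - partners" for t
    using non_partner_proportional[OF that] assms(3) by (metis bform_scaleR_right mult_zero_right)
  then have "q v (comb d) = (\<Sum>t\<in>partners. d t * q v t)"
    unfolding q_comb_right by (intro sum.mono_neutral_right) (use finite_S in auto)
  also have "\<dots> = (\<Sum>t\<in>partners. c t * q v t) / weight"
    by (simp add: d_partners sum_divide_distrib)
  also have "(\<Sum>t\<in>partners. c t * q v t) = 0"
    using q_comb_split[of v] assms(2,3) by simp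
  finally show "q v (comb d) = 0" by simp
  have "min_pairing = (\<Sum>t\<in>partners. c t / weight * min_pairing)"
    using weight_pos by (simp add: sum_distrib_right[symmetric] sum_divide_distrib[symmetric])
  also have "\<dots> \<le> (\<Sum>t\<in>partners. d t * q m t)"
  proof (rule sum_mono)
    fix t assume t: "t \<in> partners"
    then have "min_pairing \<le> q m t" using min_pairing_le m(1) by auto
    moreover have "0 \<le> c t / weight" using c(1) t weight_pos by auto
    ultimately show "c t / weight * min_pairing \<le> d t * q m t"
      unfolding d_partners[OF t] by (rule mult_left_mono)
  qed
  also have "\<dots> = q m (comb d)" using q_comb_eq_partners[OF m(1)] by simp
  also have "\<dots> \<le> q (comb d) (comb d)"
    using q_comb_square_ge[of d m] \<open>unit_coeffs d\<close> m(1) by (simp add: d_def)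
  finally show "min_pairing \<le> q (comb d) (comb d)" .
qed

end

lemma width_pos: "width > 0"
  using min_pairing_pos threshold_pos by (simp add: width_def)

text \<open>The case distinction behind the choice of \<open>width\<close>: a normalized generator \<open>m\<close> is either
  timelike, or isotropic with partners of large weight, or isotropic and orthogonal to \<open>v\<close>.\<close>

lemma exists_wide_orthogonal_comb:
  assumes "\<forall>s\<in>S. c s \<ge> 0" "comb c \<in> future_cone" "q v (comb c) = 0"
    and "v \<in> dual_lat B" "- q v v < N"
  obtains d where "unit_coeffs d" "width \<le> q (comb d) (comb d)" "q v (comb d) = 0"
proof -
  obtain c' m r where c': "unit_coeffs c'" "m \<in> S" "c' m = 1" "r > 0" "comb c' = r *\<^sub>R comb c"
    using exists_normalized_coeffs[OF assms(1,2)] by blast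
  have cone: "comb c' \<in> future_cone" using c'(4,5) assms(2) by (simp add: scaleR_future_cone)
  have orth: "q v (comb c') = 0" using c'(5) assms(3) by (simp add: bform_linear)
  have width_le: "width \<le> min_pairing" "width \<le> min_pairing * threshold"
    using min_pairing_pos by (simp_all add: width_def)
  let ?weight = "\<Sum>t\<in>{t \<in> S. q m t > 0}. c' t"
  consider "q m m > 0" | "q m m = 0" "?weight \<ge> threshold" | "q m m = 0" "?weight < threshold"
    using S_pairing_nonneg[OF c'(2) c'(2)] by linarith
  then show ?thesis
  proof cases
    case 1
    with generator_timelike_wide[OF c'(1) cone c'(2,3)] width_le show ?thesis
      using that c'(1) orth by fastforce
  next
    case 2
    then have "min_pairing * threshold \<le> min_pairing * ?weight"
      using min_pairing_pos by (intro mult_left_mono) auto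
    with min_pairing_weight_le[OF c'(1) cone c'(2,3)] width_le show ?thesis
      using that c'(1) orth by fastforce
  next
    case 3
    then have "q v m = 0"
      by (intro isotropic_generator_orthogonal[OF c'(1) cone c'(2,3) _ orth assms(4,5)])
    with isotropic_wide_comb[OF c'(1) cone c'(2,3) 3(1) orth] width_le that show ?thesis
      by fastforce
  qed
qed

lemma wall_coordinate_square_le:
  assumes "unit_coeffs d" "width \<le> q (comb d) (comb d)" "q v (comb d) = 0" "- q v v < N"
  shows "(q v e)^2 \<le> N * ((\<Sum>s\<in>S. \<bar>q s e\<bar>)^2 / width + \<bar>q e e\<bar>)"
proof -
  let ?w = "comb d"
  have ww: "q ?w ?w > 0" using assms(2) width_pos by linarith
  have "(q ?w e)^2 \<le> (\<Sum>s\<in>S. \<bar>q s e\<bar>)^2"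
    using power_mono[OF abs_q_comb_le[OF assms(1), of e] abs_ge_zero, of 2] by simp
  then have "(q ?w e)^2 / q ?w ?w \<le> (\<Sum>s\<in>S. \<bar>q s e\<bar>)^2 / width"
    using ww assms(2) width_pos by (intro frac_le) auto
  then have "(q ?w e)^2 / q ?w ?w - q e e \<le> (\<Sum>s\<in>S. \<bar>q s e\<bar>)^2 / width + \<bar>q e e\<bar>" by linarith
  moreover have "(q v e)^2 \<le> N * ((q ?w e)^2 / q ?w ?w - q e e)"
    using ww assms(3,4) orthogonal_pairing_square_le[of ?w v N e] q_commute[of v ?w] by simp
  ultimately show ?thesis using N_pos by (meson less_imp_le mult_left_mono order_trans)
qed

lemma finite_walls_meeting_cone:
  assumes "invertible B" "V \<subseteq> dual_lat B" "\<forall>v\<in>V. - q v v < N"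
  shows "finite {v \<in> V. \<exists>c. (\<forall>s\<in>S. c s \<ge> 0) \<and> comb c \<in> future_cone \<and> q (comb c) v = 0}"
proof -
  define R where "R i = sqrt (N * ((\<Sum>s\<in>S. \<bar>q s (axis i 1)\<bar>)^2 / width
    + \<bar>q (axis i 1) (axis i 1)\<bar>))" for i
  have "{v \<in> V. \<exists>c. (\<forall>s\<in>S. c s \<ge> 0) \<and> comb c \<in> future_cone \<and> q (comb c) v = 0}
    \<subseteq> (\<lambda>v. B *v v) -` {z. \<forall>i. z$i \<in> \<int> \<and> \<bar>z$i\<bar> \<le> R i}"
  proof
    fix v assume "v \<in> {v \<in> V. \<exists>c. (\<forall>s\<in>S. c s \<ge> 0) \<and> comb c \<in> future_cone \<and> q (comb c) v = 0}"
    then obtain c where v: "v \<in> V"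
      and c: "\<forall>s\<in>S. c s \<ge> 0" "comb c \<in> future_cone" "q (comb c) v = 0" by blast
    have dual: "v \<in> dual_lat B" "- q v v < N" using v assms(2,3) by auto
    have "q v (comb c) = 0" using c(3) by (simp add: q_commute[of v])
    then obtain d where d: "unit_coeffs d" "width \<le> q (comb d) (comb d)" "q v (comb d) = 0"
      by (rule exists_wide_orthogonal_comb[OF c(1,2) _ dual])
    have "(B *v v)$i \<in> \<int> \<and> \<bar>(B *v v)$i\<bar> \<le> R i" for i
    proof
      have "axis i 1 \<in> lat" by (simp add: lat_def axis_def)
      then have "q v (axis i 1) \<in> \<int>" using dual(1) by (simp add: dual_lat_def)
      then show "(B *v v)$i \<in> \<int>" by (simp add: q_commute[of v] bform_axis_left)
      have "sqrt ((q v (axis i 1))^2) \<le> R i"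
        unfolding R_def by (rule real_sqrt_le_mono) (rule wall_coordinate_square_le[OF d dual(2)])
      then show "\<bar>(B *v v)$i\<bar> \<le> R i" by (simp add: q_commute[of v] bform_axis_left)
    qed
    then show "v \<in> (\<lambda>v. B *v v) -` {z. \<forall>i. z$i \<in> \<int> \<and> \<bar>z$i\<bar> \<le> R i}" by simp
  qed
  moreover have "finite ((\<lambda>v. B *v v) -` {z :: real^'n. \<forall>i. z$i \<in> \<int> \<and> \<bar>z$i\<bar> \<le> R i})"
    by (rule finite_vimageI[OF finite_bounded_integer_vectors inj_matrix_vector_mult[OF assms(1)]])
  ultimately show ?thesis by (rule finite_subset)
qed

end

theorem proposition3p11:
  fixes B :: "real^'n^'n" and h :: "real^'n"
    and G :: "(real^'n \<Rightarrow> real^'n) set" and V S :: "(real^'n) set"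
  assumes L: "even_hyperbolic B"
    and h: "bform B h h > 0"
    and G: "finite_index_subgroup G (O_plus B h)"
    and V: "V \<subseteq> neg_set B \<inter> dual_lat B"
    and V1: "\<exists>c>0. \<forall>v\<in>V. - bform B v v < c"
    and V2: "\<forall>g\<in>G. g ` V = V"
    and V3: "\<forall>D\<in>chambers B h V. \<exists>\<Delta>. finite \<Delta> \<and> defining_set B h D \<Delta>"
    and V4: "\<forall>D\<in>chambers B h V. \<forall>x\<in>closure D. x \<noteq> 0 \<and> bform B x x = 0 \<longrightarrow>
               (\<exists>t>0. \<exists>l\<in>lat. x = t *\<^sub>R l)"
    and S: "finite S" "S \<subseteq> closure (pos_cone B h) \<inter> lat" "0 \<notin> S"
  shows "finite {D \<in> chambers B h V.
           D \<inter> ({\<Sum>v\<in>S. c v *\<^sub>R v | c. \<forall>v\<in>S. c v \<ge> 0} \<inter> pos_cone B h) \<noteq> {}}"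
proof -
  interpret lorentzian_form B h using L h by (rule lorentzian_form_if_even_hyperbolic)
  obtain N where N: "N > 0" "\<forall>v\<in>V. - q v v < N" using V1 by blast
  interpret cone_with_bounded_walls B h S N
    using S N(1) by unfold_locales (auto simp: pos_cone_eq_future_cone)
  define P where "P = {\<Sum>v\<in>S. c v *\<^sub>R v | c. \<forall>v\<in>S. c v \<ge> 0} \<inter> future_cone"
  define W where "W = {v \<in> V. \<exists>x\<in>P. q x v = 0}"
  have "invertible B" using L by (simp add: even_hyperbolic_def invertible_det_nz)
  with V N(2) have "finite {v \<in> V. \<exists>c. (\<forall>s\<in>S. c s \<ge> 0) \<and> comb c \<in> future_cone \<and> q (comb c) v = 0}"
    by (intro finite_walls_meeting_cone) auto
  moreover have "W \<subseteq> {v \<in> V. \<exists>c. (\<forall>s\<in>S. c s \<ge> 0) \<and> comb c \<in> future_cone \<and> q (comb c) v = 0}"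
    unfolding W_def P_def by blast
  ultimately have "finite W" by (rule finite_subset[rotated])
  moreover have "connected P"
    unfolding P_def by (intro convex_connected convex_Int convex_nonneg_combinations convex_future_cone)
  ultimately have "finite {D \<in> chambers B h V. D \<inter> P \<noteq> {}}"
    by (rule finite_chambers_meeting_connected) (auto simp: W_def)
  then show ?thesis by (simp add: P_def pos_cone_eq_future_cone)
qed

end
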